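(* Let $n\ge 2$. The function $\psi$ is positive on $\mathbb{C}\setminus\mathbb{R}$ and for all $z\in\mathbb{C}\setminus\mathbb{R}$ satisfies $$\psi(-z)=\psi(\bar z)=\psi(z),\qquad \psi\!\left(\frac1z\right)=|z|^4\psi(z).$$
   Context: For $z\in\mathbb{C}\setminus\mathbb{R}$, let $D_z$ be the set of $(t_1,\dots,t_{n-1})\in\mathbb{R}^{n-1}$ with $\max_{1\le k\le n-1}|t_k|\le 1$, $\left|z\sum_{k=1}^{n-1}t_k\left(z^k-\frac{\Im z^{k+1}}{\Im z}\right)\right|\le 1$ and $\left|\frac{1}{\Im z}\sum_{k=1}^{n-1}t_k\Im z^{k+1}\right|\le 1$, and define $$\psi(z)=\frac{1}{|\Im z|}\int_{D_z}\left|\sum_{k=1}^{n-1}t_k\left((k+1)z^{k}-\frac{\Im z^{k+1}}{\Im z}\right)\right|^2dt_1\dots dt_{n-1}.$$ *)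

theory Defs
  imports "HOL-Analysis.Analysis"
begin

text \<open>Lebesgue measure on R^(n-1), realised as the product measure over the index
  set {1..n-1}; points are functions t :: nat => real (extensional outside {1..n-1}).\<close>
definition lebR :: "nat \<Rightarrow> (nat \<Rightarrow> real) measure" where
  "lebR n = PiM {1..n-1} (\<lambda>_. lborel)"

definition Dz :: "nat \<Rightarrow> complex \<Rightarrow> (nat \<Rightarrow> real) set" where
  "Dz n z = {t. (\<forall>k\<in>{1..n-1}. \<bar>t k\<bar> \<le> 1)
      \<and> cmod (z * (\<Sum>k=1..n-1. complex_of_real (t k) *
            (z ^ k - complex_of_real (Im (z ^ (k+1)) / Im z)))) \<le> 1
      \<and> \<bar>(1 / Im z) * (\<Sum>k=1..n-1. t k * Im (z ^ (k+1)))\<bar> \<le> 1}"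

definition psi :: "nat \<Rightarrow> complex \<Rightarrow> real" where
  "psi n z = (1 / \<bar>Im z\<bar>) *
     (LINT t : Dz n z | lebR n.
        (cmod (\<Sum>k=1..n-1. complex_of_real (t k) *
            (of_nat (k+1) * z ^ k - complex_of_real (Im (z ^ (k+1)) / Im z))))\<^sup>2)"

end

theory Submission
  imports Defs
begin

text \<open>A parameter t fixes the top coefficients of a real polynomial P of degree n; the two
  linear conditions in Dz choose its two lowest coefficients so that P(z) = 0, so Dz is the set of
  such polynomials with all coefficients in [-1,1], and the integrand is \<bar>P'(z)\<bar>^2.
  Since P is real, replacing z by cnj z changes nothing. Replacing z by -z corresponds to
  P(w) \<mapsto> P(-w), i.e. t k \<mapsto> (-1)^k t k, which preserves Lebesgue measure. Replacing z by 1/z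
  corresponds to the reversed polynomial w^n P(1/w): on parameters a linear map of Jacobian
  \<bar>z\<bar>^(-2(n-1)), under which \<bar>P'\<bar>^2 is multiplied by \<bar>z\<bar>^(4-2n); together with
  \<bar>Im (1/z)\<bar> = \<bar>Im z\<bar> / \<bar>z\<bar>^2 this gives the factor \<bar>z\<bar>^4.
  Positivity holds because near t = (e, 0, ..., 0) the integrand is bounded below.\<close>

lemma nn_integral_lborel_affine:
  fixes c a :: real
  assumes [measurable]: "g \<in> borel_measurable borel" and c: "c \<noteq> 0"
  shows "(\<integral>\<^sup>+x. g (a + c * x) \<partial>lborel) = ennreal (1/\<bar>c\<bar>) * (\<integral>\<^sup>+x. g x \<partial>lborel)"
proof -
  have "(\<integral>\<^sup>+x. g x \<partial>lborel) = ennreal \<bar>c\<bar> * (\<integral>\<^sup>+x. g (a + c * x) \<partial>lborel)"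
    using nn_integral_real_affine[OF assms(1) c, of a] by simp
  then have "ennreal (1/\<bar>c\<bar>) * (\<integral>\<^sup>+x. g x \<partial>lborel)
      = ennreal (1/\<bar>c\<bar>) * ennreal \<bar>c\<bar> * (\<integral>\<^sup>+x. g (a + c * x) \<partial>lborel)"
    by (simp add: mult.assoc)
  also have "ennreal (1/\<bar>c\<bar>) * ennreal \<bar>c\<bar> = 1"
    using c by (simp flip: ennreal_mult)
  finally show ?thesis by simp
qed

lemma nn_integral_lborel_pair_shear:
  fixes s :: real
  assumes s: "s \<noteq> 0" and [measurable]: "case_prod g \<in> borel_measurable (lborel \<Otimes>\<^sub>M lborel)"
    "a \<in> borel_measurable lborel"
  shows "(\<integral>\<^sup>+x. \<integral>\<^sup>+y. g x (a x + s * y) \<partial>lborel \<partial>lborel)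
       = ennreal (1/\<bar>s\<bar>) * (\<integral>\<^sup>+x. \<integral>\<^sup>+y. g x y \<partial>lborel \<partial>lborel)"
proof -
  have "(\<integral>\<^sup>+x. \<integral>\<^sup>+y. g x (a x + s * y) \<partial>lborel \<partial>lborel)
      = (\<integral>\<^sup>+x. ennreal (1/\<bar>s\<bar>) * \<integral>\<^sup>+y. g x y \<partial>lborel \<partial>lborel)"
    by (intro nn_integral_cong nn_integral_lborel_affine[OF _ s]) measurable
  also have "\<dots> = ennreal (1/\<bar>s\<bar>) * (\<integral>\<^sup>+x. \<integral>\<^sup>+y. g x y \<partial>lborel \<partial>lborel)"
    by (rule nn_integral_cmult) measurable
  finally show ?thesis .
qed

lemma nn_integral_lborel_pair_linear_snd_nonzero:
  fixes p q r s e f :: real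
  assumes s: "s \<noteq> 0" and det: "p * s - q * r \<noteq> 0"
    and [measurable]: "case_prod h \<in> borel_measurable (lborel \<Otimes>\<^sub>M lborel)"
  shows "(\<integral>\<^sup>+x. \<integral>\<^sup>+y. h (p*x + q*y + e) (r*x + s*y + f) \<partial>lborel \<partial>lborel)
       = ennreal (1/\<bar>p * s - q * r\<bar>) * (\<integral>\<^sup>+x. \<integral>\<^sup>+y. h x y \<partial>lborel \<partial>lborel)"
proof -
  define d where "d = p - q*r/s"
  have d: "d \<noteq> 0" "\<bar>s\<bar> * \<bar>d\<bar> = \<bar>p * s - q * r\<bar>"
    using s det by (auto simp: d_def abs_mult[symmetric] field_simps)
  have shift: "p*x + q*(y - r*x - f)/s + e = (q*(y-f)/s + e) + d*x" for x y
    using s by (simp add: d_def field_simps)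
  have "(\<integral>\<^sup>+x. \<integral>\<^sup>+y. h (p*x + q*y + e) (r*x + s*y + f) \<partial>lborel \<partial>lborel)
      = (\<integral>\<^sup>+x. \<integral>\<^sup>+y. (\<lambda>x y. h (p*x + q*(y - r*x - f)/s + e) y) x ((r*x + f) + s*y) \<partial>lborel \<partial>lborel)"
    using s by (simp add: field_simps)
  also have "\<dots> = ennreal (1/\<bar>s\<bar>) * (\<integral>\<^sup>+x. \<integral>\<^sup>+y. h (p*x + q*(y - r*x - f)/s + e) y \<partial>lborel \<partial>lborel)"
    by (rule nn_integral_lborel_pair_shear[OF s]) measurable
  also have "(\<integral>\<^sup>+x. \<integral>\<^sup>+y. h (p*x + q*(y - r*x - f)/s + e) y \<partial>lborel \<partial>lborel)
      = (\<integral>\<^sup>+y. \<integral>\<^sup>+x. (\<lambda>y x. h x y) y ((q*(y-f)/s + e) + d*x) \<partial>lborel \<partial>lborel)"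
    using shift by (subst lborel_pair.Fubini', measurable) (simp add: ac_simps)
  also have "\<dots> = ennreal (1/\<bar>d\<bar>) * (\<integral>\<^sup>+y. \<integral>\<^sup>+x. h x y \<partial>lborel \<partial>lborel)"
    by (rule nn_integral_lborel_pair_shear[OF d(1)]) measurable
  also have "(\<integral>\<^sup>+y. \<integral>\<^sup>+x. h x y \<partial>lborel \<partial>lborel) = (\<integral>\<^sup>+x. \<integral>\<^sup>+y. h x y \<partial>lborel \<partial>lborel)"
    by (rule lborel_pair.Fubini') measurable
  finally show ?thesis
    using d s by (simp add: mult.assoc[symmetric] flip: ennreal_mult)
qed

lemma nn_integral_lborel_pair_linear:
  fixes p q r s e f :: real
  assumes det: "p * s - q * r \<noteq> 0"
    and [measurable]: "case_prod h \<in> borel_measurable (lborel \<Otimes>\<^sub>M lborel)"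
  shows "(\<integral>\<^sup>+x. \<integral>\<^sup>+y. h (p*x + q*y + e) (r*x + s*y + f) \<partial>lborel \<partial>lborel)
       = ennreal (1/\<bar>p * s - q * r\<bar>) * (\<integral>\<^sup>+x. \<integral>\<^sup>+y. h x y \<partial>lborel \<partial>lborel)"
proof (cases "s = 0")
  case False
  then show ?thesis using nn_integral_lborel_pair_linear_snd_nonzero[OF False det] by simp
next
  case True
  then have r: "r \<noteq> 0" using det by auto
  have "(\<integral>\<^sup>+x. \<integral>\<^sup>+y. h (p*x + q*y + e) (r*x + s*y + f) \<partial>lborel \<partial>lborel)
      = (\<integral>\<^sup>+y. \<integral>\<^sup>+x. h (q*y + p*x + e) (s*y + r*x + f) \<partial>lborel \<partial>lborel)"
    by (subst lborel_pair.Fubini', measurable) (simp add: ac_simps)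
  also have "\<dots> = ennreal (1/\<bar>q * r - p * s\<bar>) * (\<integral>\<^sup>+x. \<integral>\<^sup>+y. h x y \<partial>lborel \<partial>lborel)"
    by (rule nn_integral_lborel_pair_linear_snd_nonzero[OF r]) (use det in auto)
  also have "\<bar>q * r - p * s\<bar> = \<bar>p * s - q * r\<bar>" by simp
  finally show ?thesis .
qed

interpretation lborel_product: product_sigma_finite "\<lambda>_::nat. lborel::real measure"
  by unfold_locales

lemma nn_integral_PiM_lborel_insert2:
  fixes g :: "(nat \<Rightarrow> real) \<Rightarrow> ennreal"
  assumes J: "finite J" "j1 \<noteq> j2" "j1 \<notin> J" "j2 \<notin> J"
    and [measurable]: "g \<in> borel_measurable (PiM (insert j1 (insert j2 J)) (\<lambda>_. lborel))"
  shows "(\<integral>\<^sup>+t. g t \<partial>PiM (insert j1 (insert j2 J)) (\<lambda>_. lborel))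
    = (\<integral>\<^sup>+x. \<integral>\<^sup>+y2. \<integral>\<^sup>+y1. g (x(j2 := y2, j1 := y1)) \<partial>lborel \<partial>lborel \<partial>PiM J (\<lambda>_. lborel))"
  using J by (subst lborel_product.product_nn_integral_insert, auto)
    (subst lborel_product.product_nn_integral_insert, auto, measurable)

lemma nn_integral_lborel_pair_fun_upd_linear:
  fixes h :: "(nat \<Rightarrow> real) \<Rightarrow> ennreal" and p q r s a b :: real
  assumes "j1 \<noteq> j2" and det: "p * s - q * r \<noteq> 0"
    and x: "x \<in> space (PiM J (\<lambda>_. lborel))"
    and hm: "h \<in> borel_measurable (PiM (insert j1 (insert j2 J)) (\<lambda>_. lborel))"
  shows "(\<integral>\<^sup>+y2. \<integral>\<^sup>+y1. h (x(j1 := p * y1 + q * y2 + a, j2 := r * y1 + s * y2 + b)) \<partial>lborel \<partial>lborel)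
     = ennreal (1/\<bar>p * s - q * r\<bar>) * (\<integral>\<^sup>+y2. \<integral>\<^sup>+y1. h (x(j2 := y2, j1 := y1)) \<partial>lborel \<partial>lborel)"
proof -
  define hx where "hx u v = h (x(j1 := v, j2 := u))" for u v
  have "(\<lambda>w::real\<times>real. x(j1 := snd w)) \<in> measurable (lborel \<Otimes>\<^sub>M lborel) (PiM (insert j1 J) (\<lambda>_. lborel))"
    by (rule measurable_fun_upd[OF _ measurable_const[OF x]]) auto
  then have "(\<lambda>w::real\<times>real. x(j1 := snd w, j2 := fst w))
      \<in> measurable (lborel \<Otimes>\<^sub>M lborel) (PiM (insert j1 (insert j2 J)) (\<lambda>_. lborel))"
    by (rule measurable_fun_upd[rotated]) auto
  from measurable_comp[OF this hm] have hxm: "case_prod hx \<in> borel_measurable (lborel \<Otimes>\<^sub>M lborel)"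
    by (simp add: hx_def comp_def case_prod_beta')
  have "(\<integral>\<^sup>+y2. \<integral>\<^sup>+y1. h (x(j1 := p * y1 + q * y2 + a, j2 := r * y1 + s * y2 + b)) \<partial>lborel \<partial>lborel)
     = (\<integral>\<^sup>+y2. \<integral>\<^sup>+y1. hx (s*y2 + r*y1 + b) (q*y2 + p*y1 + a) \<partial>lborel \<partial>lborel)"
    by (simp add: hx_def ac_simps)
  also have "\<dots> = ennreal (1/\<bar>s * p - r * q\<bar>) * (\<integral>\<^sup>+y2. \<integral>\<^sup>+y1. hx y2 y1 \<partial>lborel \<partial>lborel)"
    by (rule nn_integral_lborel_pair_linear[OF _ hxm]) (use det in \<open>simp add: ac_simps\<close>)
  also have "(\<integral>\<^sup>+y2. \<integral>\<^sup>+y1. hx y2 y1 \<partial>lborel \<partial>lborel) = (\<integral>\<^sup>+y2. \<integral>\<^sup>+y1. h (x(j2 := y2, j1 := y1)) \<partial>lborel \<partial>lborel)"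
    using assms(1) by (simp add: hx_def fun_upd_twist)
  also have "\<bar>s * p - r * q\<bar> = \<bar>p * s - q * r\<bar>" by (simp add: ac_simps)
  finally show ?thesis .
qed

lemma nn_integral_PiM_lborel_linear_pair:
  fixes h :: "(nat \<Rightarrow> real) \<Rightarrow> ennreal" and a b :: "(nat \<Rightarrow> real) \<Rightarrow> real" and p q r s :: real
  assumes I: "finite I" "j1 \<in> I" "j2 \<in> I" "j1 \<noteq> j2" and det: "p * s - q * r \<noteq> 0"
    and hm: "h \<in> borel_measurable (PiM I (\<lambda>_. lborel))"
    and am: "a \<in> borel_measurable (PiM I (\<lambda>_. lborel))"
    and bm: "b \<in> borel_measurable (PiM I (\<lambda>_. lborel))"
    and a_indep: "\<And>t u v. a (t(j1 := u, j2 := v)) = a t"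
    and b_indep: "\<And>t u v. b (t(j1 := u, j2 := v)) = b t"
  shows "(\<integral>\<^sup>+t. h (t(j1 := p * t j1 + q * t j2 + a t, j2 := r * t j1 + s * t j2 + b t)) \<partial>PiM I (\<lambda>_. lborel))
     = ennreal (1/\<bar>p * s - q * r\<bar>) * (\<integral>\<^sup>+t. h t \<partial>PiM I (\<lambda>_. lborel))"
proof -
  define J where "J = I - {j1, j2}"
  have IJ: "I = insert j1 (insert j2 J)" and J: "finite J" "j1 \<notin> J" "j2 \<notin> J"
    using I by (auto simp: J_def)
  note [measurable] = hm[unfolded IJ] am[unfolded IJ] bm[unfolded IJ]
  define S where "S t = t(j1 := p * t j1 + q * t j2 + a t, j2 := r * t j1 + s * t j2 + b t)" for t
  have "(\<lambda>t. t(j1 := p * t j1 + q * t j2 + a t))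
      \<in> measurable (PiM (insert j1 (insert j2 J)) (\<lambda>_. lborel)) (PiM (insert j1 (insert j2 J)) (\<lambda>_. lborel))"
    by (rule measurable_fun_upd[where J="insert j1 (insert j2 J)"]) (auto, measurable)
  then have [measurable]: "S \<in> measurable (PiM (insert j1 (insert j2 J)) (\<lambda>_. lborel)) (PiM (insert j1 (insert j2 J)) (\<lambda>_. lborel))"
    unfolding S_def by (rule measurable_fun_upd[where J="insert j1 (insert j2 J)", rotated]) (auto, measurable)
  have S_upd: "S (x(j2 := y2, j1 := y1)) = x(j1 := p * y1 + q * y2 + a x, j2 := r * y1 + s * y2 + b x)" for x y1 y2
    using I a_indep[of x y1 y2] b_indep[of x y1 y2] by (simp add: S_def fun_upd_twist)
  have "(\<integral>\<^sup>+t. h (S t) \<partial>PiM I (\<lambda>_. lborel))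
     = (\<integral>\<^sup>+x. \<integral>\<^sup>+y2. \<integral>\<^sup>+y1. h (S (x(j2 := y2, j1 := y1))) \<partial>lborel \<partial>lborel \<partial>PiM J (\<lambda>_. lborel))"
    unfolding IJ by (rule nn_integral_PiM_lborel_insert2) (use I J IJ in auto, measurable)
  also have "\<dots> = (\<integral>\<^sup>+x. ennreal (1/\<bar>p * s - q * r\<bar>) * \<integral>\<^sup>+y2. \<integral>\<^sup>+y1. h (x(j2 := y2, j1 := y1)) \<partial>lborel \<partial>lborel \<partial>PiM J (\<lambda>_. lborel))"
    unfolding S_upd using I det hm[unfolded IJ]
    by (intro nn_integral_cong nn_integral_lborel_pair_fun_upd_linear) auto
  also have "\<dots> = ennreal (1/\<bar>p * s - q * r\<bar>) * (\<integral>\<^sup>+t. h t \<partial>PiM I (\<lambda>_. lborel))"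
    unfolding IJ using I J IJ
    by (subst nn_integral_cmult, measurable) (subst nn_integral_PiM_lborel_insert2, auto)
  finally show ?thesis unfolding S_def .
qed

lemma nn_integral_PiM_lborel_scale:
  fixes h :: "(nat \<Rightarrow> real) \<Rightarrow> ennreal" and c :: real
  assumes I: "finite I" "j \<in> I" and c: "c \<noteq> 0"
    and hm: "h \<in> borel_measurable (PiM I (\<lambda>_. lborel))"
  shows "(\<integral>\<^sup>+t. h (t(j := c * t j)) \<partial>PiM I (\<lambda>_. lborel)) = ennreal (1/\<bar>c\<bar>) * (\<integral>\<^sup>+t. h t \<partial>PiM I (\<lambda>_. lborel))"
proof -
  define J where "J = I - {j}"
  have IJ: "I = insert j J" and J: "finite J" "j \<notin> J" using I by (auto simp: J_def)
  note [measurable] = hm[unfolded IJ]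
  have m: "(\<lambda>t. t(j := c * t j)) \<in> measurable (PiM (insert j J) (\<lambda>_. lborel)) (PiM (insert j J) (\<lambda>_. lborel))"
    by (rule measurable_fun_upd[where J="insert j J"]) (auto, measurable)
  have "(\<integral>\<^sup>+t. h (t(j := c * t j)) \<partial>PiM I (\<lambda>_. lborel))
      = (\<integral>\<^sup>+x. \<integral>\<^sup>+y. h (x(j := c * y)) \<partial>lborel \<partial>PiM J (\<lambda>_. lborel))"
    unfolding IJ using J
    by (subst lborel_product.product_nn_integral_insert) (auto intro: measurable_comp[OF m, unfolded comp_def])
  also have "\<dots> = (\<integral>\<^sup>+x. ennreal (1/\<bar>c\<bar>) * \<integral>\<^sup>+y. h (x(j := y)) \<partial>lborel \<partial>PiM J (\<lambda>_. lborel))"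
  proof (rule nn_integral_cong)
    fix x :: "nat \<Rightarrow> real" assume x: "x \<in> space (PiM J (\<lambda>_. lborel))"
    have "(\<lambda>y. h (x(j := y))) \<in> borel_measurable borel"
      using measurable_comp[OF measurable_component_update[OF x J(2)] hm[unfolded IJ]] by (simp add: comp_def)
    from nn_integral_lborel_affine[OF this c, of 0]
    show "(\<integral>\<^sup>+y. h (x(j := c * y)) \<partial>lborel) = ennreal (1/\<bar>c\<bar>) * \<integral>\<^sup>+y. h (x(j := y)) \<partial>lborel"
      by simp
  qed
  also have "\<dots> = ennreal (1/\<bar>c\<bar>) * (\<integral>\<^sup>+t. h t \<partial>PiM I (\<lambda>_. lborel))"
    unfolding IJ using J
    by (subst nn_integral_cmult, measurable) (subst lborel_product.product_nn_integral_insert, auto)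
  finally show ?thesis .
qed

lemma emeasure_lborel_vimage_unit_mult:
  fixes c :: real
  assumes c: "\<bar>c\<bar> = 1" and B: "B \<in> sets borel"
  shows "emeasure lborel ((\<lambda>x. c * x) -` B) = emeasure lborel B"
proof -
  have "distr lborel borel ((*) c) = lborel"
    using lborel_distr_mult[of c] c by (simp add: density_1)
  then show ?thesis using emeasure_distr[of "(*) c" lborel borel B] B by simp
qed

lemma distr_PiM_lborel_signed_permute:
  fixes sg :: "nat \<Rightarrow> real"
  assumes I: "finite I" and bij: "bij_betw \<sigma> I I" and sg: "\<And>k. \<bar>sg k\<bar> = 1"
  shows "distr (PiM I (\<lambda>_. lborel)) (PiM I (\<lambda>_. lborel)) (\<lambda>t. \<lambda>k\<in>I. sg k * t (\<sigma> k)) = PiM I (\<lambda>_. lborel)"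
    (is "distr ?M ?M ?T = ?M")
proof (rule lborel_product.PiM_eqI[OF I])
  define \<tau> where "\<tau> = inv_into I \<sigma>"
  have \<sigma>I: "k \<in> I \<Longrightarrow> \<sigma> k \<in> I" for k using bij by (auto dest: bij_betwE)
  have bij\<tau>: "bij_betw \<tau> I I" using bij unfolding \<tau>_def by (rule bij_betw_inv_into)
  then have \<tau>I: "j \<in> I \<Longrightarrow> \<tau> j \<in> I" for j by (auto dest: bij_betwE)
  have \<sigma>\<tau>: "j \<in> I \<Longrightarrow> \<sigma> (\<tau> j) = j" for j using bij unfolding \<tau>_def by (simp add: bij_betw_inv_into_right)
  have \<tau>\<sigma>: "k \<in> I \<Longrightarrow> \<tau> (\<sigma> k) = k" for k using bij unfolding \<tau>_def by (simp add: bij_betw_inv_into_left)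
  have Tm: "?T \<in> measurable ?M ?M"
    by (rule measurable_restrict) (use \<sigma>I in measurable)
  show "sets (distr ?M ?M ?T) = sets ?M" by simp
  fix A :: "nat \<Rightarrow> real set" assume A: "\<And>i. i \<in> I \<Longrightarrow> A i \<in> sets lborel"
  have "?T -` Pi\<^sub>E I A \<inter> space ?M = Pi\<^sub>E I (\<lambda>j. (\<lambda>x. sg (\<tau> j) * x) -` A (\<tau> j))"
  proof -
    have "(\<forall>k\<in>I. sg k * t (\<sigma> k) \<in> A k) \<longleftrightarrow> (\<forall>j\<in>I. sg (\<tau> j) * t j \<in> A (\<tau> j))" for t
      using \<sigma>I \<tau>I \<sigma>\<tau> \<tau>\<sigma> by metis
    then show ?thesis by (auto simp: space_PiM PiE_def Pi_def extensional_def)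
  qed
  then have "emeasure (distr ?M ?M ?T) (Pi\<^sub>E I A) = emeasure ?M (Pi\<^sub>E I (\<lambda>j. (\<lambda>x. sg (\<tau> j) * x) -` A (\<tau> j)))"
    using A I by (subst emeasure_distr[OF Tm]) (auto intro: sets_PiM_I_finite)
  also have "\<dots> = (\<Prod>j\<in>I. emeasure lborel ((\<lambda>x. sg (\<tau> j) * x) -` A (\<tau> j)))"
  proof (rule lborel_product.emeasure_PiM[OF I])
    fix j assume "j \<in> I"
    have "(\<lambda>x::real. sg (\<tau> j) * x) \<in> measurable lborel lborel" by measurable
    from measurable_sets[OF this A[OF \<tau>I[OF \<open>j \<in> I\<close>]]]
    show "(\<lambda>x. sg (\<tau> j) * x) -` A (\<tau> j) \<in> sets lborel" by simp
  qed
  also have "\<dots> = (\<Prod>j\<in>I. emeasure lborel (A (\<tau> j)))"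
    using A \<tau>I by (intro prod.cong refl emeasure_lborel_vimage_unit_mult sg) auto
  also have "\<dots> = (\<Prod>k\<in>I. emeasure lborel (A k))"
    using prod.reindex_bij_betw[OF bij\<tau>, of "\<lambda>k. emeasure lborel (A k)"] by simp
  finally show "emeasure (distr ?M ?M ?T) (Pi\<^sub>E I A) = (\<Prod>k\<in>I. emeasure lborel (A k))" .
qed

lemma nn_integral_PiM_lborel_signed_permute:
  fixes h :: "(nat \<Rightarrow> real) \<Rightarrow> ennreal" and sg :: "nat \<Rightarrow> real"
  assumes I: "finite I" and bij: "bij_betw \<sigma> I I" and sg: "\<And>k. \<bar>sg k\<bar> = 1"
    and hm: "h \<in> borel_measurable (PiM I (\<lambda>_. lborel))"
  shows "(\<integral>\<^sup>+t. h (\<lambda>k\<in>I. sg k * t (\<sigma> k)) \<partial>PiM I (\<lambda>_. lborel)) = (\<integral>\<^sup>+t. h t \<partial>PiM I (\<lambda>_. lborel))"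
proof -
  have "(\<lambda>t. \<lambda>k\<in>I. sg k * t (\<sigma> k)) \<in> measurable (PiM I (\<lambda>_. lborel)) (PiM I (\<lambda>_. lborel))"
    using bij by (intro measurable_restrict) (auto dest: bij_betwE)
  from nn_integral_distr[OF this] hm show ?thesis
    by (simp add: distr_PiM_lborel_signed_permute[OF I bij sg])
qed

text \<open>root_poly_coeff n z t j is the coefficient of w^j in P, and deriv_at_root n z t = P'(z).\<close>

definition root_ratio :: "complex \<Rightarrow> nat \<Rightarrow> real" where
  "root_ratio z k = Im (z ^ (k+1)) / Im z"

definition lin_weight :: "complex \<Rightarrow> nat \<Rightarrow> real" where
  "lin_weight z k = - root_ratio z k"

definition const_weight :: "complex \<Rightarrow> nat \<Rightarrow> real" where
  "const_weight z k = - Re (z * (z ^ k - complex_of_real (root_ratio z k)))"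

definition deriv_weight :: "complex \<Rightarrow> nat \<Rightarrow> complex" where
  "deriv_weight z k = of_nat (k+1) * z ^ k - complex_of_real (root_ratio z k)"

definition lin_coeff :: "nat \<Rightarrow> complex \<Rightarrow> (nat \<Rightarrow> real) \<Rightarrow> real" where
  "lin_coeff n z t = (\<Sum>k=1..n-1. t k * lin_weight z k)"

definition const_coeff :: "nat \<Rightarrow> complex \<Rightarrow> (nat \<Rightarrow> real) \<Rightarrow> real" where
  "const_coeff n z t = (\<Sum>k=1..n-1. t k * const_weight z k)"

definition deriv_at_root :: "nat \<Rightarrow> complex \<Rightarrow> (nat \<Rightarrow> real) \<Rightarrow> complex" where
  "deriv_at_root n z t = (\<Sum>k=1..n-1. complex_of_real (t k) * deriv_weight z k)"

definition root_poly_coeff :: "nat \<Rightarrow> complex \<Rightarrow> (nat \<Rightarrow> real) \<Rightarrow> nat \<Rightarrow> real" where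
  "root_poly_coeff n z t j =
     (if j = 0 then const_coeff n z t else if j = 1 then lin_coeff n z t else t (j - 1))"

lemma sum_atLeast0_atMost_split_first_two:
  fixes f :: "nat \<Rightarrow> 'a::comm_monoid_add"
  assumes "1 \<le> n"
  shows "(\<Sum>j=0..n. f j) = f 0 + f 1 + (\<Sum>k=1..n-1. f (k+1))"
  using assms
proof (induction n rule: nat_induct_at_least)
  case base then show ?case by simp
next
  case (Suc n)
  have "(\<Sum>k=1..Suc n - 1. f (k+1)) = (\<Sum>k=1..n-1. f (k+1)) + f (Suc n)"
    using Suc.hyps by (cases n) (auto simp: sum.cl_ivl_Suc)
  then show ?case using Suc by (simp add: ac_simps)
qed

lemma const_weight_real:
  assumes "Im z \<noteq> 0"
  shows "z * (z ^ k - complex_of_real (root_ratio z k)) = complex_of_real (- const_weight z k)"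
proof -
  have "z * (z ^ k - complex_of_real (root_ratio z k)) = z ^ (k+1) - complex_of_real (root_ratio z k) * z"
    by (simp add: algebra_simps)
  then have "Im (z * (z ^ k - complex_of_real (root_ratio z k))) = 0"
    using assms by (simp add: root_ratio_def)
  then show ?thesis by (simp add: const_weight_def complex_eq_iff)
qed

lemma z_mult_sum_eq_const_coeff:
  assumes "Im z \<noteq> 0"
  shows "z * (\<Sum>k=1..n-1. complex_of_real (t k) * (z ^ k - complex_of_real (root_ratio z k)))
    = complex_of_real (- const_coeff n z t)"
proof -
  have "z * (\<Sum>k=1..n-1. complex_of_real (t k) * (z ^ k - complex_of_real (root_ratio z k)))
      = (\<Sum>k=1..n-1. complex_of_real (t k) * (z * (z ^ k - complex_of_real (root_ratio z k))))"
    by (simp add: sum_distrib_left algebra_simps)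
  also have "\<dots> = complex_of_real (- const_coeff n z t)"
    using const_weight_real[OF assms] by (simp add: const_coeff_def sum_negf)
  finally show ?thesis .
qed

lemma Dz_iff_coeffs:
  assumes "Im z \<noteq> 0"
  shows "t \<in> Dz n z \<longleftrightarrow>
    (\<forall>k\<in>{1..n-1}. \<bar>t k\<bar> \<le> 1) \<and> \<bar>const_coeff n z t\<bar> \<le> 1 \<and> \<bar>lin_coeff n z t\<bar> \<le> 1"
proof -
  have "cmod (z * (\<Sum>k=1..n-1. complex_of_real (t k) * (z ^ k - complex_of_real (Im (z ^ (k+1)) / Im z))))
      = \<bar>const_coeff n z t\<bar>"
    using z_mult_sum_eq_const_coeff[OF assms, where n=n and t=t] unfolding root_ratio_def by simp
  moreover have "(1 / Im z) * (\<Sum>k=1..n-1. t k * Im (z ^ (k+1))) = - lin_coeff n z t"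
    using assms by (simp add: lin_coeff_def lin_weight_def root_ratio_def sum_distrib_left sum_negf)
  ultimately show ?thesis by (simp only: Dz_def mem_Collect_eq abs_minus_cancel)
qed

lemma Dz_iff_root_poly_coeff:
  assumes "Im z \<noteq> 0" "1 \<le> n"
  shows "t \<in> Dz n z \<longleftrightarrow> (\<forall>j\<in>{0..n}. \<bar>root_poly_coeff n z t j\<bar> \<le> 1)"
proof -
  have "(\<forall>j\<in>{0..n}. P j) \<longleftrightarrow> P 0 \<and> P 1 \<and> (\<forall>k\<in>{1..n-1}. P (k+1))" for P
  proof
    assume "\<forall>j\<in>{0..n}. P j"
    then show "P 0 \<and> P 1 \<and> (\<forall>k\<in>{1..n-1}. P (k+1))" using assms(2) by auto
  next
    assume H: "P 0 \<and> P 1 \<and> (\<forall>k\<in>{1..n-1}. P (k+1))"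
    show "\<forall>j\<in>{0..n}. P j"
    proof
      fix j assume j: "j \<in> {0..n}"
      show "P j"
      proof (cases "j \<le> 1")
        case True then show ?thesis using H by (cases j) auto
      next
        case False
        then have "j - 1 \<in> {1..n-1}" "j - 1 + 1 = j" using j by auto
        then show ?thesis using H by metis
      qed
    qed
  qed
  then show ?thesis using assms by (simp add: Dz_iff_coeffs root_poly_coeff_def) blast
qed

lemma root_poly_at_root:
  assumes "1 \<le> n" "Im z \<noteq> 0"
  shows "(\<Sum>j=0..n. complex_of_real (root_poly_coeff n z t j) * z ^ j) = 0"
proof -
  have "(\<Sum>j=0..n. complex_of_real (root_poly_coeff n z t j) * z ^ j)
     = complex_of_real (const_coeff n z t) + complex_of_real (lin_coeff n z t) * z
       + (\<Sum>k=1..n-1. complex_of_real (t k) * z ^ (k+1))"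
    by (subst sum_atLeast0_atMost_split_first_two[OF assms(1)]) (simp add: root_poly_coeff_def)
  moreover have "(\<Sum>k=1..n-1. complex_of_real (t k) * z ^ (k+1)) + complex_of_real (lin_coeff n z t) * z
      = z * (\<Sum>k=1..n-1. complex_of_real (t k) * (z ^ k - complex_of_real (root_ratio z k)))"
    by (simp add: lin_coeff_def lin_weight_def sum_distrib_left sum_distrib_right algebra_simps
        sum_subtractf sum_negf)
  ultimately show ?thesis
    using z_mult_sum_eq_const_coeff[OF assms(2), where n=n and t=t] by (simp add: algebra_simps)
qed

lemma root_poly_deriv_at_root:
  assumes "1 \<le> n"
  shows "z * deriv_at_root n z t = (\<Sum>j=0..n. of_nat j * complex_of_real (root_poly_coeff n z t j) * z ^ j)"
proof -
  have "(\<Sum>j=0..n. of_nat j * complex_of_real (root_poly_coeff n z t j) * z ^ j)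
     = complex_of_real (lin_coeff n z t) * z + (\<Sum>k=1..n-1. of_nat (k+1) * complex_of_real (t k) * z ^ (k+1))"
    by (subst sum_atLeast0_atMost_split_first_two[OF assms]) (simp add: root_poly_coeff_def)
  also have "\<dots> = z * deriv_at_root n z t"
    by (simp add: deriv_at_root_def deriv_weight_def lin_coeff_def lin_weight_def sum_distrib_left
        sum_distrib_right algebra_simps sum_subtractf sum_negf)
  finally show ?thesis by simp
qed

text \<open>The parameter of the reversed polynomial w^n P(1/w), which has the root 1/z.\<close>

definition reflect_params :: "nat \<Rightarrow> complex \<Rightarrow> (nat \<Rightarrow> real) \<Rightarrow> (nat \<Rightarrow> real)" where
  "reflect_params n z t = (\<lambda>k\<in>{1..n-1}. root_poly_coeff n z t (n - 1 - k))"

lemma of_real_add_of_real_mult_eq_0_iff: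
  assumes "Im w \<noteq> 0"
  shows "complex_of_real x + complex_of_real y * w = 0 \<longleftrightarrow> x = 0 \<and> y = 0"
proof
  assume H: "complex_of_real x + complex_of_real y * w = 0"
  then have "Im (complex_of_real x + complex_of_real y * w) = 0" by simp
  then have "y = 0" using assms by simp
  then show "x = 0 \<and> y = 0" using H by simp
qed simp

lemma Im_divide_nonzero: "Im z \<noteq> 0 \<Longrightarrow> Im (1/z) \<noteq> 0"
  by (cases "z = 0") (auto simp: Im_divide' sum_power2_gt_zero_iff)

lemma sum_atLeast0_atMost_reflect: "(\<Sum>j=0..n. f (n - j)) = (\<Sum>j=0..(n::nat). (f j :: 'a::comm_monoid_add))"
proof -
  have "(\<Sum>j=0..n. f (n - j)) = (\<Sum>j=0..n. f (n - (n + 0 - j)))"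
    by (rule sum.atLeastAtMost_rev)
  also have "\<dots> = (\<Sum>j=0..n. f j)" by (rule sum.cong) auto
  finally show ?thesis .
qed

lemma one_over_power_mult_power:
  fixes z :: complex
  assumes "z \<noteq> 0" "j \<le> n"
  shows "(1/z) ^ j * z ^ n = z ^ (n - j)"
proof -
  have "z ^ n = z ^ (n - j) * z ^ j" using assms(2) by (simp flip: power_add)
  then show ?thesis using assms(1) by (simp add: power_one_over field_simps)
qed

lemma reversed_poly_mult_power:
  fixes c :: "nat \<Rightarrow> complex" and z :: complex
  assumes "z \<noteq> 0"
  shows "(\<Sum>j=0..n. c (n - j) * (1/z) ^ j) * z ^ n = (\<Sum>j=0..n. c j * z ^ j)"
proof -
  have "(\<Sum>j=0..n. c (n - j) * (1/z) ^ j) * z ^ n = (\<Sum>j=0..n. c (n - j) * z ^ (n - j))"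
    using assms by (simp add: sum_distrib_right mult.assoc one_over_power_mult_power)
  also have "\<dots> = (\<Sum>j=0..n. c j * z ^ j)"
    by (rule sum_atLeast0_atMost_reflect[where f="\<lambda>j. c j * z ^ j"])
  finally show ?thesis .
qed

text \<open>The coefficient sequences of the reversed polynomial and of the polynomial built from
  reflect_params n z t both annihilate 1/z and agree from degree 2 on; since 1/z is not real,
  they agree in degrees 0 and 1 too.\<close>

lemma root_poly_coeff_reflect_params:
  assumes n: "2 \<le> n" and z: "Im z \<noteq> 0" and j: "j \<le> n"
  shows "root_poly_coeff n (1/z) (reflect_params n z t) j = root_poly_coeff n z t (n - j)"
proof -
  let ?c = "root_poly_coeff n z t" and ?d = "root_poly_coeff n (1/z) (reflect_params n z t)"
  have z': "Im (1/z) \<noteq> 0" using Im_divide_nonzero[OF z] .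
  have high: "?d j = ?c (n - j)" if "2 \<le> j" "j \<le> n" for j
  proof -
    have "j - 1 \<in> {1..n-1}" "n - 1 - (j - 1) = n - j" using that by auto
    then show ?thesis using that by (simp add: root_poly_coeff_def reflect_params_def)
  qed
  have "(\<Sum>j=0..n. complex_of_real (?c (n - j)) * (1/z) ^ j) * z ^ n = 0"
    using reversed_poly_mult_power[of z "\<lambda>j. complex_of_real (?c j)" n] root_poly_at_root[of n z t] n z
    by auto
  then have "(\<Sum>j=0..n. complex_of_real (?c (n - j)) * (1/z) ^ j) = 0"
    using z by auto
  with root_poly_at_root[of n "1/z" "reflect_params n z t"] n z'
  have "(\<Sum>j=0..n. complex_of_real (?d j - ?c (n - j)) * (1/z) ^ j) = 0"
    by (simp add: algebra_simps sum_subtractf)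
  then have "complex_of_real (?d 0 - ?c n) + complex_of_real (?d 1 - ?c (n - 1)) * (1/z)
      + (\<Sum>k=1..n-1. complex_of_real (?d (k+1) - ?c (n - (k+1))) * (1/z) ^ (k+1)) = 0"
    using n by (subst (asm) sum_atLeast0_atMost_split_first_two) auto
  moreover have "(\<Sum>k=1..n-1. complex_of_real (?d (k+1) - ?c (n - (k+1))) * (1/z) ^ (k+1)) = 0"
    by (rule sum.neutral) (use high in auto)
  ultimately have "complex_of_real (?d 0 - ?c n) + complex_of_real (?d 1 - ?c (n - 1)) * (1/z) = 0"
    by simp
  from iffD1[OF of_real_add_of_real_mult_eq_0_iff[OF z'] this]
  have "?d 0 = ?c n" "?d 1 = ?c (n - 1)" by simp_all
  then show ?thesis using high j by (cases "j = 0"; cases "j = 1") auto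
qed

lemma reflect_params_in_Dz_iff:
  assumes n: "2 \<le> n" and z: "Im z \<noteq> 0"
  shows "reflect_params n z t \<in> Dz n (1/z) \<longleftrightarrow> t \<in> Dz n z"
proof -
  have "(\<forall>j\<in>{0..n}. \<bar>root_poly_coeff n z t (n - j)\<bar> \<le> 1) \<longleftrightarrow> (\<forall>j\<in>{0..n}. \<bar>root_poly_coeff n z t j\<bar> \<le> 1)"
    by (metis atLeastAtMost_iff diff_diff_cancel diff_le_self zero_le)
  then show ?thesis
    using n z Im_divide_nonzero[OF z]
    by (simp add: Dz_iff_root_poly_coeff root_poly_coeff_reflect_params)
qed

lemma deriv_at_root_reflect_params:
  assumes n: "2 \<le> n" and z: "Im z \<noteq> 0"
  shows "z ^ (n - 1) * deriv_at_root n (1/z) (reflect_params n z t) = - (z * deriv_at_root n z t)"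
proof -
  let ?c = "\<lambda>j. complex_of_real (root_poly_coeff n z t j)"
  have z0: "z \<noteq> 0" using z by auto
  have "(1/z) * deriv_at_root n (1/z) (reflect_params n z t)
      = (\<Sum>j=0..n. of_nat j * complex_of_real (root_poly_coeff n (1/z) (reflect_params n z t) j) * (1/z) ^ j)"
    by (rule root_poly_deriv_at_root) (use n in auto)
  also have "\<dots> = (\<Sum>j=0..n. of_nat j * ?c (n - j) * (1/z) ^ j)"
    using root_poly_coeff_reflect_params[OF n z] by (intro sum.cong) auto
  also have "\<dots> = (\<Sum>j=0..n. (of_nat n - of_nat (n - j)) * ?c (n - j) * (1/z) ^ j)"
    by (intro sum.cong) (auto simp: of_nat_diff)
  finally have "((1/z) * deriv_at_root n (1/z) (reflect_params n z t)) * z ^ n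
      = (\<Sum>j=0..n. (of_nat n - of_nat j) * ?c j * z ^ j)"
    using reversed_poly_mult_power[OF z0, of "\<lambda>j. (of_nat n - of_nat j) * ?c j" n] by simp
  also have "\<dots> = of_nat n * (\<Sum>j=0..n. ?c j * z ^ j) - (\<Sum>j=0..n. of_nat j * ?c j * z ^ j)"
    by (simp add: sum_distrib_left sum_subtractf[symmetric] algebra_simps)
  also have "\<dots> = - (z * deriv_at_root n z t)"
    using root_poly_at_root[of n z t] root_poly_deriv_at_root[of n z t] n z by simp
  finally have E: "((1/z) * deriv_at_root n (1/z) (reflect_params n z t)) * z ^ n = - (z * deriv_at_root n z t)" .
  have "z ^ n = z * z ^ (n - 1)" using n by (simp flip: power_Suc)
  then have "((1/z) * deriv_at_root n (1/z) (reflect_params n z t)) * z ^ n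
      = z ^ (n - 1) * deriv_at_root n (1/z) (reflect_params n z t)"
    using z0 by simp
  with E show ?thesis by simp
qed

lemma const_weight_eq: "const_weight z k = - Re (z ^ (k+1)) + Re z * root_ratio z k"
  by (simp add: const_weight_def algebra_simps)

lemma const_weight_1: "Im z \<noteq> 0 \<Longrightarrow> const_weight z 1 = cmod z ^ 2"
proof -
  assume z: "Im z \<noteq> 0"
  then have "root_ratio z 1 = 2 * Re z" by (simp add: root_ratio_def power2_eq_square)
  then show ?thesis unfolding cmod_power2 by (simp add: const_weight_eq power2_eq_square algebra_simps)
qed

lemma lin_const_weight_det:
  assumes z: "Im z \<noteq> 0"
  shows "lin_weight z m * const_weight z (Suc m) - lin_weight z (Suc m) * const_weight z m
    = - (cmod z ^ (2 * Suc m))"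
proof -
  define u where "u = z ^ Suc m"
  have "lin_weight z m * const_weight z (Suc m) - lin_weight z (Suc m) * const_weight z m
      = root_ratio z m * Re (z * u) - root_ratio z (Suc m) * Re u"
    by (simp add: lin_weight_def const_weight_eq u_def algebra_simps)
  also have "\<dots> = (Im u * Re (z * u) - Im (z * u) * Re u) / Im z"
    using z by (simp add: root_ratio_def u_def field_simps)
  also have "Im u * Re (z * u) - Im (z * u) * Re u = - Im z * (cmod u)\<^sup>2"
    by (simp only: cmod_power2) (simp add: power2_eq_square algebra_simps)
  also have "(cmod u)\<^sup>2 = cmod z ^ (2 * Suc m)"
    by (simp add: u_def norm_mult norm_power power_mult_distrib power_mult mult.commute[of 2] power2_eq_square)
  finally show ?thesis using z by simp
qed

lemma sum_remove_two:
  fixes g :: "nat \<Rightarrow> 'a::comm_monoid_add"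
  assumes "finite I" "j1 \<in> I" "j2 \<in> I" "j1 \<noteq> j2"
  shows "(\<Sum>k\<in>I. g k) = g j1 + g j2 + (\<Sum>k\<in>I-{j1,j2}. g k)"
proof -
  have "(\<Sum>k\<in>I. g k) = g j1 + (\<Sum>k\<in>I-{j1}. g k)"
    using assms by (simp add: sum.remove)
  also have "(\<Sum>k\<in>I-{j1}. g k) = g j2 + (\<Sum>k\<in>I-{j1}-{j2}. g k)"
    using assms by (intro sum.remove) auto
  also have "I-{j1}-{j2} = I-{j1,j2}" by auto
  finally show ?thesis by (simp add: add.assoc)
qed

text \<open>So reflect_params is a coordinate permutation composed with a linear map that moves only
  the last two coordinates; its Jacobian is the determinant computed in lin_const_weight_det.\<close>

lemma reflect_params_eq_permute:
  assumes "2 \<le> n"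
  shows "reflect_params n z t = (\<lambda>k\<in>{1..n-1}.
    (t(n-2 := lin_coeff n z t, n-1 := const_coeff n z t)) (if k \<le> n-3 then n-2-k else k))"
proof
  fix k
  show "reflect_params n z t k = (\<lambda>k\<in>{1..n-1}.
    (t(n-2 := lin_coeff n z t, n-1 := const_coeff n z t)) (if k \<le> n-3 then n-2-k else k)) k"
  proof (cases "k \<in> {1..n-1}")
    case True
    then consider "k \<le> n - 3" | "k = n - 2" | "k = n - 1" by force
    then show ?thesis
      using True assms by cases (auto simp: reflect_params_def root_poly_coeff_def)
  qed (auto simp: reflect_params_def)
qed

lemma nn_integral_reflect_params_2:
  fixes h :: "(nat \<Rightarrow> real) \<Rightarrow> ennreal"
  assumes z: "Im z \<noteq> 0" and hm: "h \<in> borel_measurable (lebR 2)"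
  shows "(\<integral>\<^sup>+t. h (reflect_params 2 z t) \<partial>lebR 2) = ennreal (1 / cmod z ^ 2) * (\<integral>\<^sup>+t. h t \<partial>lebR 2)"
proof -
  have "reflect_params 2 z t = t(1 := const_weight z 1 * t 1)" if "t \<in> space (PiM {1} (\<lambda>_. lborel))" for t
    using that by (auto simp: reflect_params_def root_poly_coeff_def const_coeff_def space_PiM PiE_def
        extensional_def fun_eq_iff)
  then have "(\<integral>\<^sup>+t. h (reflect_params 2 z t) \<partial>lebR 2)
      = (\<integral>\<^sup>+t. h (t(1 := const_weight z 1 * t 1)) \<partial>PiM {1} (\<lambda>_. lborel))"
    by (auto simp: lebR_def intro: nn_integral_cong)
  also have "\<dots> = ennreal (1/\<bar>const_weight z 1\<bar>) * (\<integral>\<^sup>+t. h t \<partial>PiM {1} (\<lambda>_. lborel))"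
    by (rule nn_integral_PiM_lborel_scale) (use hm z const_weight_1[OF z] in \<open>auto simp: lebR_def\<close>)
  finally show ?thesis using const_weight_1[OF z] by (simp add: lebR_def)
qed

lemma nn_integral_reflect_params:
  fixes h :: "(nat \<Rightarrow> real) \<Rightarrow> ennreal"
  assumes n: "2 \<le> n" and z: "Im z \<noteq> 0" and hm: "h \<in> borel_measurable (lebR n)"
  shows "(\<integral>\<^sup>+t. h (reflect_params n z t) \<partial>lebR n) = ennreal (1 / cmod z ^ (2*(n-1))) * (\<integral>\<^sup>+t. h t \<partial>lebR n)"
proof (cases "n = 2")
  case True
  then show ?thesis using nn_integral_reflect_params_2[OF z] hm by simp
next
  case False
  define I where "I = {1..n-1}"
  define j1 where "j1 = n - 2"
  define j2 where "j2 = n - 1"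
  have J: "finite I" "j1 \<in> I" "j2 \<in> I" "j1 \<noteq> j2" using n False by (auto simp: I_def j1_def j2_def)
  define \<sigma> where "\<sigma> k = (if k \<le> n - 3 then n - 2 - k else k)" for k
  have bij: "bij_betw \<sigma> I I"
    by (rule bij_betwI[where g=\<sigma>]) (auto simp: \<sigma>_def I_def)
  define a where "a t = (\<Sum>k\<in>I-{j1,j2}. t k * lin_weight z k)" for t :: "nat \<Rightarrow> real"
  define b where "b t = (\<Sum>k\<in>I-{j1,j2}. t k * const_weight z k)" for t :: "nat \<Rightarrow> real"
  let ?p = "lin_weight z j1" and ?q = "lin_weight z j2" and ?r = "const_weight z j1" and ?s = "const_weight z j2"
  have "Suc (n - 2) = n - 1" using n by simp
  then have det: "?p * ?s - ?q * ?r = - (cmod z ^ (2*(n-1)))"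
    using lin_const_weight_det[OF z, of "n-2"] by (simp add: j1_def j2_def)
  have "cmod z \<noteq> 0" using z by auto
  then have det_nz: "?p * ?s - ?q * ?r \<noteq> 0" unfolding det by simp
  have L: "lebR n = PiM I (\<lambda>_. lborel)" unfolding lebR_def I_def ..
  have perm_m: "(\<lambda>u. h (\<lambda>k\<in>I. 1 * u (\<sigma> k))) \<in> borel_measurable (PiM I (\<lambda>_. lborel))"
    using bij hm[unfolded L] by (intro measurable_compose[OF measurable_restrict]) (auto dest: bij_betwE)
  have "lin_coeff n z t = ?p * t j1 + ?q * t j2 + a t" "const_coeff n z t = ?r * t j1 + ?s * t j2 + b t" for t
    unfolding lin_coeff_def const_coeff_def a_def b_def I_def[symmetric]
    using sum_remove_two[OF J] by (simp_all add: ac_simps)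
  then have "reflect_params n z t = (\<lambda>k\<in>I. 1 * (t(j1 := ?p * t j1 + ?q * t j2 + a t,
      j2 := ?r * t j1 + ?s * t j2 + b t)) (\<sigma> k))" for t
    using reflect_params_eq_permute[OF n, of z t] by (simp add: I_def j1_def j2_def \<sigma>_def)
  then have "(\<integral>\<^sup>+t. h (reflect_params n z t) \<partial>lebR n)
      = (\<integral>\<^sup>+t. (\<lambda>u. h (\<lambda>k\<in>I. 1 * u (\<sigma> k)))
           (t(j1 := ?p * t j1 + ?q * t j2 + a t, j2 := ?r * t j1 + ?s * t j2 + b t)) \<partial>PiM I (\<lambda>_. lborel))"
    unfolding L by simp
  also have "\<dots> = ennreal (1/\<bar>?p * ?s - ?q * ?r\<bar>) * (\<integral>\<^sup>+u. h (\<lambda>k\<in>I. 1 * u (\<sigma> k)) \<partial>PiM I (\<lambda>_. lborel))"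
    using J det_nz by (intro nn_integral_PiM_lborel_linear_pair perm_m) (auto simp: a_def b_def intro!: sum.cong)
  also have "(\<integral>\<^sup>+u. h (\<lambda>k\<in>I. 1 * u (\<sigma> k)) \<partial>PiM I (\<lambda>_. lborel)) = (\<integral>\<^sup>+u. h u \<partial>PiM I (\<lambda>_. lborel))"
    by (rule nn_integral_PiM_lborel_signed_permute[OF J(1) bij _ hm[unfolded L]]) simp
  finally show ?thesis by (simp add: L det)
qed

definition alternate_params :: "nat \<Rightarrow> (nat \<Rightarrow> real) \<Rightarrow> (nat \<Rightarrow> real)" where
  "alternate_params n t = (\<lambda>k\<in>{1..n-1}. (-1) ^ k * t k)"

lemma root_ratio_uminus: "root_ratio (-z) k = (-1) ^ k * root_ratio z k"
  by (cases "even k") (simp_all add: root_ratio_def power_minus_odd minus_divide_left)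

lemma lin_coeff_alternate_params: "lin_coeff n (-z) (alternate_params n t) = lin_coeff n z t"
proof -
  have sign: "((-1) ^ k * t k) * lin_weight (-z) k = t k * lin_weight z k" for k
    by (cases "even k") (simp_all add: lin_weight_def root_ratio_uminus)
  show ?thesis unfolding lin_coeff_def alternate_params_def by (intro sum.cong refl) (simp add: sign)
qed

lemma const_coeff_alternate_params: "const_coeff n (-z) (alternate_params n t) = - const_coeff n z t"
proof -
  have "((-1) ^ k * t k) * const_weight (-z) k = - (t k * const_weight z k)" for k
    by (cases "even k") (simp_all add: const_weight_def root_ratio_uminus power_minus_odd algebra_simps)
  then show ?thesis by (simp add: const_coeff_def alternate_params_def sum_negf)
qed

lemma deriv_at_root_alternate_params: "deriv_at_root n (-z) (alternate_params n t) = deriv_at_root n z t"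
proof -
  have "complex_of_real ((-1) ^ k * t k) * deriv_weight (-z) k = complex_of_real (t k) * deriv_weight z k" for k
    by (cases "even k") (simp_all add: deriv_weight_def root_ratio_uminus power_minus_odd algebra_simps)
  then show ?thesis unfolding deriv_at_root_def alternate_params_def by (intro sum.cong refl) simp
qed

lemma alternate_params_in_Dz_iff:
  assumes "Im z \<noteq> 0"
  shows "alternate_params n t \<in> Dz n (-z) \<longleftrightarrow> t \<in> Dz n z"
proof -
  have "\<bar>alternate_params n t k\<bar> = \<bar>t k\<bar>" if "k \<in> {1..n-1}" for k
    using that by (simp add: alternate_params_def abs_mult)
  then show ?thesis
    using assms by (simp add: Dz_iff_coeffs lin_coeff_alternate_params const_coeff_alternate_params)
qed

lemma root_ratio_cnj: "root_ratio (cnj z) k = root_ratio z k"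
  by (simp add: root_ratio_def flip: complex_cnj_power) (simp add: divide_simps)

lemma const_weight_cnj: "const_weight (cnj z) k = const_weight z k"
  by (simp add: const_weight_eq root_ratio_cnj flip: complex_cnj_power)

lemma deriv_at_root_cnj: "deriv_at_root n (cnj z) t = cnj (deriv_at_root n z t)"
  by (simp add: deriv_at_root_def deriv_weight_def root_ratio_cnj)

lemma Dz_cnj:
  assumes "Im z \<noteq> 0"
  shows "Dz n (cnj z) = Dz n z"
  using assms
  by (auto simp: Dz_iff_coeffs lin_coeff_def const_coeff_def lin_weight_def root_ratio_cnj const_weight_cnj)

definition psi_integrand :: "nat \<Rightarrow> complex \<Rightarrow> (nat \<Rightarrow> real) \<Rightarrow> real" where
  "psi_integrand n z t = indicator (Dz n z) t * (cmod (deriv_at_root n z t))\<^sup>2"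

lemma psi_integrand_nonneg: "0 \<le> psi_integrand n z t"
  by (simp add: psi_integrand_def)

lemma psi_integrand_measurable:
  assumes "Im z \<noteq> 0"
  shows "psi_integrand n z \<in> borel_measurable (lebR n)"
proof -
  have "psi_integrand n z = (\<lambda>t. (if (\<forall>k\<in>{1..n-1}. \<bar>t k\<bar> \<le> 1) \<and> \<bar>const_coeff n z t\<bar> \<le> 1
      \<and> \<bar>lin_coeff n z t\<bar> \<le> 1 then 1 else 0) * (cmod (deriv_at_root n z t))\<^sup>2)"
    using assms by (simp add: psi_integrand_def indicator_def Dz_iff_coeffs fun_eq_iff)
  then show ?thesis
    unfolding lebR_def lin_coeff_def const_coeff_def deriv_at_root_def by simp
qed

lemma psi_eq_nn_integral:
  assumes "Im z \<noteq> 0"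
  shows "psi n z = (1 / \<bar>Im z\<bar>) * enn2real (\<integral>\<^sup>+t. ennreal (psi_integrand n z t) \<partial>lebR n)"
proof -
  have "psi n z = (1 / \<bar>Im z\<bar>) * integral\<^sup>L (lebR n) (psi_integrand n z)"
    unfolding psi_def set_lebesgue_integral_def psi_integrand_def deriv_at_root_def deriv_weight_def
      root_ratio_def by simp
  also have "integral\<^sup>L (lebR n) (psi_integrand n z) = enn2real (\<integral>\<^sup>+t. ennreal (psi_integrand n z t) \<partial>lebR n)"
    by (intro integral_eq_nn_integral psi_integrand_measurable assms AE_I2 psi_integrand_nonneg)
  finally show ?thesis .
qed

lemma norm_deriv_weight_1: "Im z \<noteq> 0 \<Longrightarrow> cmod (deriv_weight z 1) = 2 * \<bar>Im z\<bar>"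
proof -
  assume "Im z \<noteq> 0"
  then have "root_ratio z 1 = 2 * Re z" by (simp add: root_ratio_def power2_eq_square)
  then have "deriv_weight z 1 = \<i> * complex_of_real (2 * Im z)"
    by (simp add: deriv_weight_def complex_eq_iff)
  then show ?thesis by (simp add: norm_mult)
qed

lemma abs_sum_mult_le:
  fixes w t :: "'a \<Rightarrow> real"
  assumes "\<And>k. k \<in> I \<Longrightarrow> \<bar>t k\<bar> \<le> e"
  shows "\<bar>\<Sum>k\<in>I. t k * w k\<bar> \<le> e * (\<Sum>k\<in>I. \<bar>w k\<bar>)"
proof -
  have "\<bar>\<Sum>k\<in>I. t k * w k\<bar> \<le> (\<Sum>k\<in>I. \<bar>t k * w k\<bar>)" by (rule sum_abs)
  also have "\<dots> \<le> (\<Sum>k\<in>I. e * \<bar>w k\<bar>)"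
    by (rule sum_mono) (simp add: abs_mult assms mult_right_mono)
  finally show ?thesis by (simp add: sum_distrib_left)
qed

lemma nn_integral_psi_integrand_finite:
  assumes z: "Im z \<noteq> 0"
  shows "(\<integral>\<^sup>+t. ennreal (psi_integrand n z t) \<partial>lebR n) < \<infinity>"
proof -
  define I where "I = {1..n-1}"
  define K where "K = (\<Sum>k\<in>I. cmod (deriv_weight z k))"
  define C where "C = Pi\<^sub>E I (\<lambda>_. {-1..1::real})"
  have L: "lebR n = PiM I (\<lambda>_. lborel)" by (simp add: lebR_def I_def)
  have C_sets: "C \<in> sets (lebR n)" unfolding L C_def by (intro sets_PiM_I_finite) (auto simp: I_def)
  have bound: "ennreal (psi_integrand n z t) \<le> ennreal (K\<^sup>2) * indicator C t" if t: "t \<in> space (lebR n)" for t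
  proof (cases "t \<in> Dz n z")
    case True
    then have tb: "\<forall>k\<in>I. \<bar>t k\<bar> \<le> 1" using Dz_iff_coeffs[OF z] by (simp add: I_def)
    have "t \<in> C" using t tb unfolding L C_def by (auto simp: space_PiM PiE_def Pi_def)
    have "cmod (deriv_at_root n z t) \<le> (\<Sum>k\<in>I. cmod (complex_of_real (t k) * deriv_weight z k))"
      unfolding deriv_at_root_def I_def by (rule norm_sum)
    also have "\<dots> \<le> K"
      unfolding K_def using tb by (intro sum_mono) (simp add: norm_mult mult_left_le_one_le)
    finally have "(cmod (deriv_at_root n z t))\<^sup>2 \<le> K\<^sup>2" by (simp add: power_mono)
    then show ?thesis using True \<open>t \<in> C\<close> by (simp add: psi_integrand_def)
  qed (simp add: psi_integrand_def)
  have "(\<integral>\<^sup>+t. ennreal (psi_integrand n z t) \<partial>lebR n) \<le> (\<integral>\<^sup>+t. ennreal (K\<^sup>2) * indicator C t \<partial>lebR n)"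
    by (rule nn_integral_mono) (rule bound)
  also have "\<dots> = ennreal (K\<^sup>2) * emeasure (lebR n) C"
    by (rule nn_integral_cmult_indicator[OF C_sets])
  also have "emeasure (lebR n) C = (\<Prod>k\<in>I. emeasure lborel {-1..1::real})"
    unfolding L C_def by (rule lborel_product.emeasure_PiM) (auto simp: I_def)
  also have "ennreal (K\<^sup>2) * (\<Prod>k\<in>I. emeasure lborel {-1..1::real}) < \<infinity>"
    by (simp add: less_top[symmetric] ennreal_mult_eq_top_iff power_eq_top_ennreal I_def)
  finally show ?thesis .
qed

lemma mem_Dz_if_params_small:
  assumes z: "Im z \<noteq> 0"
  obtains \<delta> where "0 < \<delta>" "\<delta> \<le> 1" "\<And>t. (\<And>k. k \<in> {1..n-1} \<Longrightarrow> \<bar>t k\<bar> \<le> \<delta>) \<Longrightarrow> t \<in> Dz n z"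
proof
  define W where "W = 1 + (\<Sum>k=1..n-1. \<bar>lin_weight z k\<bar> + \<bar>const_weight z k\<bar>)"
  have W: "1 \<le> W" "(\<Sum>k=1..n-1. \<bar>lin_weight z k\<bar>) \<le> W" "(\<Sum>k=1..n-1. \<bar>const_weight z k\<bar>) \<le> W"
    by (simp_all add: W_def sum.distrib sum_nonneg)
  show "0 < 1 / W" "1 / W \<le> 1" using W by simp_all
  fix t assume small: "\<And>k. k \<in> {1..n-1} \<Longrightarrow> \<bar>t k\<bar> \<le> 1 / W"
  have "\<bar>lin_coeff n z t\<bar> \<le> 1 / W * W"
    unfolding lin_coeff_def using W
    by (intro order_trans[OF abs_sum_mult_le[OF small]] mult_left_mono) simp_all
  moreover have "\<bar>const_coeff n z t\<bar> \<le> 1 / W * W"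
    unfolding const_coeff_def using W
    by (intro order_trans[OF abs_sum_mult_le[OF small]] mult_left_mono) simp_all
  moreover have "\<bar>t k\<bar> \<le> 1" if "k \<in> {1..n-1}" for k
    by (rule order_trans[OF small[OF that]]) (use W in simp)
  ultimately show "t \<in> Dz n z" using z W by (simp add: Dz_iff_coeffs)
qed

lemma norm_deriv_at_root_ge:
  assumes z: "Im z \<noteq> 0" and n: "2 \<le> n" and small: "\<And>k. k \<in> {2..n-1} \<Longrightarrow> \<bar>t k\<bar> \<le> h"
  shows "2 * \<bar>Im z\<bar> * t 1 - h * (\<Sum>k=2..n-1. cmod (deriv_weight z k)) \<le> cmod (deriv_at_root n z t)"
proof -
  let ?rest = "\<Sum>k=2..n-1. complex_of_real (t k) * deriv_weight z k"
  have "deriv_at_root n z t = complex_of_real (t 1) * deriv_weight z 1 + ?rest"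
    unfolding deriv_at_root_def using n by (subst sum.atLeast_Suc_atMost) (simp_all add: numeral_2_eq_2)
  then have "cmod (complex_of_real (t 1) * deriv_weight z 1) - cmod ?rest \<le> cmod (deriv_at_root n z t)"
    by (simp add: norm_diff_ineq)
  moreover have "2 * \<bar>Im z\<bar> * t 1 \<le> cmod (complex_of_real (t 1) * deriv_weight z 1)"
    using norm_deriv_weight_1[OF z] by (simp add: norm_mult mult.commute mult_left_mono)
  moreover have "cmod ?rest \<le> (\<Sum>k=2..n-1. h * cmod (deriv_weight z k))"
    using small by (intro order_trans[OF norm_sum] sum_mono) (simp add: norm_mult mult_right_mono)
  ultimately show ?thesis by (simp add: sum_distrib_left)
qed

text \<open>Near t = (e, 0, ..., 0) the polynomial P is close to e (w - z)(w - cnj z), whose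
  derivative at z has modulus 2 e \<bar>Im z\<bar>.\<close>

lemma psi_integrand_ge_on_box:
  assumes n: "2 \<le> n" and z: "Im z \<noteq> 0"
  obtains e h where "0 < e" "0 < h"
    "\<And>t. t 1 \<in> {e..2*e} \<Longrightarrow> (\<And>k. k \<in> {2..n-1} \<Longrightarrow> t k \<in> {-h..h}) \<Longrightarrow>
      (e * \<bar>Im z\<bar>)\<^sup>2 \<le> psi_integrand n z t"
proof -
  obtain \<delta> where \<delta>: "0 < \<delta>" "\<delta> \<le> 1" "\<And>t. (\<And>k. k \<in> {1..n-1} \<Longrightarrow> \<bar>t k\<bar> \<le> \<delta>) \<Longrightarrow> t \<in> Dz n z"
    using mem_Dz_if_params_small[OF z] by blast
  define a where "a = \<bar>Im z\<bar>"
  define W where "W = 1 + (\<Sum>k=2..n-1. cmod (deriv_weight z k))"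
  define e where "e = \<delta> / 2"
  define h where "h = e * a / (W + a)"
  have a: "0 < a" using z by (simp add: a_def)
  have W: "1 \<le> W" by (simp add: W_def sum_nonneg)
  have e: "0 < e" using \<delta> by (simp add: e_def)
  have h: "0 < h" "h \<le> e" "h * W \<le> e * a"
    using e a W by (simp_all add: h_def field_simps)
  show thesis
  proof (rule that[OF e h(1)])
    fix t assume t1: "t 1 \<in> {e..2*e}" and box: "\<And>k. k \<in> {2..n-1} \<Longrightarrow> t k \<in> {-h..h}"
    have "\<bar>t k\<bar> \<le> \<delta>" if "k \<in> {1..n-1}" for k
      using t1 box[of k] h e that by (cases "k = 1") (auto simp: e_def)
    then have "t \<in> Dz n z" by (rule \<delta>(3))
    have "a * e \<le> a * t 1" using t1 a by simp
    then have "e * a \<le> 2 * a * t 1 - h * (W - 1)"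
      using h by (simp add: algebra_simps)
    also have "\<dots> \<le> cmod (deriv_at_root n z t)"
    proof -
      have "\<bar>t k\<bar> \<le> h" if "k \<in> {2..n-1}" for k using box[OF that] by auto
      from norm_deriv_at_root_ge[OF z n this] show ?thesis by (simp add: a_def W_def)
    qed
    finally have "(e * a)\<^sup>2 \<le> (cmod (deriv_at_root n z t))\<^sup>2"
      using e a by (intro power_mono) simp_all
    then show "(e * \<bar>Im z\<bar>)\<^sup>2 \<le> psi_integrand n z t"
      using \<open>t \<in> Dz n z\<close> by (simp add: psi_integrand_def a_def)
  qed
qed

lemma nn_integral_psi_integrand_pos:
  assumes n: "2 \<le> n" and z: "Im z \<noteq> 0"
  shows "0 < (\<integral>\<^sup>+t. ennreal (psi_integrand n z t) \<partial>lebR n)"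
proof -
  obtain e h where e: "0 < e" and h: "0 < h" and ge: "\<And>t. t 1 \<in> {e..2*e} \<Longrightarrow>
      (\<And>k. k \<in> {2..n-1} \<Longrightarrow> t k \<in> {-h..h}) \<Longrightarrow> (e * \<bar>Im z\<bar>)\<^sup>2 \<le> psi_integrand n z t"
    using psi_integrand_ge_on_box[OF n z] by blast
  define I where "I = {1..n-1}"
  define B where "B = Pi\<^sub>E I (\<lambda>k. if k = 1 then {e..2*e} else {-h..h})"
  define c where "c = (e * \<bar>Im z\<bar>)\<^sup>2"
  have I: "1 \<in> I" "finite I" using n by (auto simp: I_def)
  have L: "lebR n = PiM I (\<lambda>_. lborel)" by (simp add: lebR_def I_def)
  have B_sets: "B \<in> sets (lebR n)" unfolding L B_def by (intro sets_PiM_I_finite) (auto simp: I)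
  have "ennreal c * indicator B t \<le> ennreal (psi_integrand n z t)" for t
  proof (cases "t \<in> B")
    case True
    have "t 1 \<in> {e..2*e}" using PiE_mem[OF True[unfolded B_def] I(1)] by simp
    moreover have "t k \<in> {-h..h}" if "k \<in> {2..n-1}" for k
      using PiE_mem[OF True[unfolded B_def], of k] that by (simp add: I_def)
    ultimately have "c \<le> psi_integrand n z t" unfolding c_def by (rule ge)
    then show ?thesis using True by (simp add: ennreal_leI)
  qed simp
  then have "ennreal c * emeasure (lebR n) B \<le> (\<integral>\<^sup>+t. ennreal (psi_integrand n z t) \<partial>lebR n)"
    by (subst nn_integral_cmult_indicator[OF B_sets, symmetric]) (rule nn_integral_mono)
  moreover have "emeasure (lebR n) B = ennreal (\<Prod>k\<in>I. if k = 1 then e else 2 * h)"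
  proof -
    have "emeasure (lebR n) B = (\<Prod>k\<in>I. emeasure lborel (if k = 1 then {e..2*e} else {-h..h}))"
      unfolding L B_def by (rule lborel_product.emeasure_PiM) (auto simp: I)
    also have "\<dots> = (\<Prod>k\<in>I. ennreal (if k = 1 then e else 2 * h))"
      using e h by (intro prod.cong) auto
    finally show ?thesis using e h by (simp add: prod_ennreal)
  qed
  moreover have "0 < ennreal c * ennreal (\<Prod>k\<in>I. if k = 1 then e else 2 * h)"
  proof -
    have "0 < c" "0 < (\<Prod>k\<in>I. if k = 1 then e else 2 * h)"
      using e h z by (simp_all add: c_def prod_pos)
    then show ?thesis by (simp flip: ennreal_mult)
  qed
  ultimately show ?thesis by simp
qed

lemma psi_pos:
  assumes "2 \<le> n" "Im z \<noteq> 0"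
  shows "0 < psi n z"
  using nn_integral_psi_integrand_pos[OF assms] nn_integral_psi_integrand_finite[OF assms(2)] assms(2)
  by (simp add: psi_eq_nn_integral enn2real_positive_iff)

lemma psi_cnj:
  assumes "Im z \<noteq> 0"
  shows "psi n (cnj z) = psi n z"
proof -
  have "psi_integrand n (cnj z) = psi_integrand n z"
    using assms by (simp add: fun_eq_iff psi_integrand_def Dz_cnj deriv_at_root_cnj)
  then show ?thesis using assms by (simp add: psi_eq_nn_integral)
qed

lemma psi_uminus:
  assumes z: "Im z \<noteq> 0"
  shows "psi n (-z) = psi n z"
proof -
  have z': "Im (-z) \<noteq> 0" using z by simp
  have [measurable]: "psi_integrand n (-z) \<in> borel_measurable (PiM {1..n-1} (\<lambda>_. lborel))"
    using psi_integrand_measurable[OF z'] by (simp add: lebR_def)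
  have "psi_integrand n (-z) (alternate_params n t) = psi_integrand n z t" for t
    by (simp add: psi_integrand_def indicator_def alternate_params_in_Dz_iff[OF z]
        deriv_at_root_alternate_params)
  then have "(\<integral>\<^sup>+t. ennreal (psi_integrand n z t) \<partial>lebR n)
      = (\<integral>\<^sup>+t. ennreal (psi_integrand n (-z) (\<lambda>k\<in>{1..n-1}. (-1) ^ k * t (id k))) \<partial>PiM {1..n-1} (\<lambda>_. lborel))"
    by (simp add: alternate_params_def lebR_def)
  also have "\<dots> = (\<integral>\<^sup>+t. ennreal (psi_integrand n (-z) t) \<partial>lebR n)"
    unfolding lebR_def
  proof (rule nn_integral_PiM_lborel_signed_permute[where \<sigma>=id])
    show "(\<lambda>t. ennreal (psi_integrand n (-z) t)) \<in> borel_measurable (PiM {1..n-1} (\<lambda>_. lborel))"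
      by measurable
  qed simp_all
  finally show ?thesis using z z' by (simp add: psi_eq_nn_integral)
qed

lemma nn_integral_psi_integrand_inverse:
  assumes n: "2 \<le> n" and z: "Im z \<noteq> 0"
  shows "(\<integral>\<^sup>+t. ennreal (psi_integrand n (1/z) t) \<partial>lebR n)
    = ennreal ((cmod z)\<^sup>2) * (\<integral>\<^sup>+t. ennreal (psi_integrand n z t) \<partial>lebR n)"
proof -
  have z': "Im (1/z) \<noteq> 0" using Im_divide_nonzero[OF z] .
  note [measurable] = psi_integrand_measurable[OF z] psi_integrand_measurable[OF z']
  define \<kappa> where "\<kappa> = cmod z ^ (2*(n-1))"
  have "z \<noteq> 0" using z by auto
  then have \<kappa>: "0 < \<kappa>" by (simp add: \<kappa>_def)
  have pointwise: "psi_integrand n (1/z) (reflect_params n z t) = (cmod z)\<^sup>2 / \<kappa> * psi_integrand n z t" for t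
  proof -
    have "cmod z ^ (n-1) * cmod (deriv_at_root n (1/z) (reflect_params n z t)) = cmod z * cmod (deriv_at_root n z t)"
      using arg_cong[OF deriv_at_root_reflect_params[OF n z, of t], of cmod] by (simp add: norm_mult norm_power)
    then have "\<kappa> * (cmod (deriv_at_root n (1/z) (reflect_params n z t)))\<^sup>2
        = (cmod z)\<^sup>2 * (cmod (deriv_at_root n z t))\<^sup>2"
      unfolding \<kappa>_def by (metis power_mult power_mult_distrib mult.commute)
    then have norms: "(cmod (deriv_at_root n (1/z) (reflect_params n z t)))\<^sup>2
        = (cmod z)\<^sup>2 / \<kappa> * (cmod (deriv_at_root n z t))\<^sup>2"
      using \<kappa> by (simp add: field_simps)
    show ?thesis
      unfolding psi_integrand_def indicator_def using norms by (simp add: reflect_params_in_Dz_iff[OF n z])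
  qed
  have "ennreal ((cmod z)\<^sup>2 / \<kappa>) * (\<integral>\<^sup>+t. ennreal (psi_integrand n z t) \<partial>lebR n)
      = (\<integral>\<^sup>+t. ennreal (psi_integrand n (1/z) (reflect_params n z t)) \<partial>lebR n)"
    using \<kappa> by (subst nn_integral_cmult[symmetric], measurable)
      (intro nn_integral_cong, simp add: pointwise psi_integrand_nonneg flip: ennreal_mult)
  also have "\<dots> = ennreal (1 / \<kappa>) * (\<integral>\<^sup>+t. ennreal (psi_integrand n (1/z) t) \<partial>lebR n)"
    unfolding \<kappa>_def by (rule nn_integral_reflect_params[OF n z]) measurable
  finally have "ennreal \<kappa> * (ennreal ((cmod z)\<^sup>2 / \<kappa>) * (\<integral>\<^sup>+t. ennreal (psi_integrand n z t) \<partial>lebR n))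
      = ennreal \<kappa> * (ennreal (1 / \<kappa>) * (\<integral>\<^sup>+t. ennreal (psi_integrand n (1/z) t) \<partial>lebR n))"
    by simp
  then show ?thesis using \<kappa> by (simp add: mult.assoc[symmetric] flip: ennreal_mult)
qed

lemma psi_inverse:
  assumes n: "2 \<le> n" and z: "Im z \<noteq> 0"
  shows "psi n (1/z) = (cmod z) ^ 4 * psi n z"
proof -
  have "\<bar>Im (1/z)\<bar> = \<bar>Im z\<bar> / (cmod z)\<^sup>2" by (simp add: Im_divide')
  then show ?thesis
    using z Im_divide_nonzero[OF z]
    by (simp add: psi_eq_nn_integral nn_integral_psi_integrand_inverse[OF n z] enn2real_mult)
qed

theorem proposition1:
  fixes n :: nat
  assumes "n \<ge> 2"
  shows "\<forall>z::complex. Im z \<noteq> 0 \<longrightarrow>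
           psi n z > 0 \<and> psi n (- z) = psi n z \<and> psi n (cnj z) = psi n z
           \<and> psi n (1 / z) = (cmod z) ^ 4 * psi n z"
  using assms psi_pos psi_uminus psi_cnj psi_inverse by blast

end
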